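(* Let $B_J=L+U\in\mathbb R^{n\times n}$ with $L$ strictly lower triangular and $U$ strictly upper triangular, and assume all the matrices $L^{(j)}_c$ ($1\le j\le n-1$), $U^{(j)}_c$ ($2\le j\le n$), $L^{(i)}_r$ ($2\le i\le n$), $U^{(i)}_r$ ($1\le i\le n-1$) are nonzero. Consider the splittings $\mathcal B_{FTC}=(L^{(1)}_c,\dots,L^{(n-1)}_c,U^{(n)}_c,\dots,U^{(2)}_c)$ and $\mathcal B_{FTR}=(L^{(2)}_r,\dots,L^{(n)}_r,U^{(n-1)}_r,\dots,U^{(1)}_r)$ of $B_J$ (each of order $2n-2$), and the symmetric Gauss–Seidel matrix $B_{sGS}=(I-U)^{-1}L(I-L)^{-1}U$. Then $T(\mathcal B_{FTC})$, $T(\mathcal B_{FTR})$ and $B_{sGS}$ all have the same nonzero eigenvalues.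
   Context: For $j\in\{1,\dots,n-1\}$, $L^{(j)}_c$ is the $n\times n$ matrix equal to $L$ in column $j$ (rows $i\ge j+1$) and zero elsewhere; for $j\in\{2,\dots,n\}$, $U^{(j)}_c$ equals $U$ in column $j$ (rows $i\le j-1$) and is zero elsewhere; for $i\in\{2,\dots,n\}$, $L^{(i)}_r$ equals $L$ in row $i$ (columns $j\le i-1$) and is zero elsewhere; for $i\in\{1,\dots,n-1\}$, $U^{(i)}_r$ equals $U$ in row $i$ (columns $j\ge i+1$) and is zero elsewhere. For $B\in\mathbb R^{n\times n}$, a splitting of $B$ of order $d\ge1$ is an ordered $d$-tuple $\mathcal B=(B_1,\dots,B_d)$ of real $n\times n$ matrices with $B_p\neq O$ for all $p$, $\sum_{p=1}^d B_p=B$, and $B_p\circ B_q=O$ (Hadamard product) for $p\ne q$. The iteration matrix of $\mathcal B$ is the $dn\times dn$ matrix $T(\mathcal B)=(I_{dn}-\mathcal L)^{-1}\mathcal U$, where $\mathcal L,\mathcal U$ are $d\times d$ block matrices with $n\times n$ blocks, $\mathcal L_{ij}=B_j$ if $i>j$ and $O$ otherwise, $\mathcal U_{ij}=B_j$ if $i\le j$ and $O$ otherwise. *)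

theory Defs
  imports "Jordan_Normal_Form.Matrix" "Jordan_Normal_Form.Char_Poly"
begin

(* Inverse of a square matrix (meaningful when the matrix is invertible). *)
definition inv_mat :: "real mat \<Rightarrow> real mat" where
  "inv_mat A = (SOME B. B \<in> carrier_mat (dim_row A) (dim_row A) \<and>
       A * B = 1\<^sub>m (dim_row A) \<and> B * A = 1\<^sub>m (dim_row A))"

(* 0-based indices: column / row pieces of L and U (paper's index j is our j-1) *)
definition Lc :: "nat \<Rightarrow> real mat \<Rightarrow> nat \<Rightarrow> real mat" where
  "Lc n L j = mat n n (\<lambda>(i,k). if k = j \<and> i > j then L $$ (i,k) else 0)"
definition Uc :: "nat \<Rightarrow> real mat \<Rightarrow> nat \<Rightarrow> real mat" where
  "Uc n U j = mat n n (\<lambda>(i,k). if k = j \<and> i < j then U $$ (i,k) else 0)"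
definition Lr :: "nat \<Rightarrow> real mat \<Rightarrow> nat \<Rightarrow> real mat" where
  "Lr n L i = mat n n (\<lambda>(r,k). if r = i \<and> k < i then L $$ (r,k) else 0)"
definition Ur :: "nat \<Rightarrow> real mat \<Rightarrow> nat \<Rightarrow> real mat" where
  "Ur n U i = mat n n (\<lambda>(r,k). if r = i \<and> k > i then U $$ (r,k) else 0)"

definition blockL :: "nat \<Rightarrow> real mat list \<Rightarrow> real mat" where
  "blockL n Bs = mat (length Bs * n) (length Bs * n)
     (\<lambda>(i,j). if i div n > j div n then (Bs ! (j div n)) $$ (i mod n, j mod n) else 0)"
definition blockU :: "nat \<Rightarrow> real mat list \<Rightarrow> real mat" where
  "blockU n Bs = mat (length Bs * n) (length Bs * n)
     (\<lambda>(i,j). if i div n \<le> j div n then (Bs ! (j div n)) $$ (i mod n, j mod n) else 0)"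

definition iter_mat :: "nat \<Rightarrow> real mat list \<Rightarrow> real mat" where
  "iter_mat n Bs = inv_mat (1\<^sub>m (length Bs * n) - blockL n Bs) * blockU n Bs"

definition nonzero_eigs :: "real mat \<Rightarrow> complex set" where
  "nonzero_eigs A = {e. e \<noteq> 0 \<and> eigenvalue (map_mat complex_of_real A) e}"

definition B_FTC :: "nat \<Rightarrow> real mat \<Rightarrow> real mat \<Rightarrow> real mat list" where
  "B_FTC n L U = map (Lc n L) [0..<n-1] @ map (Uc n U) (rev [1..<n])"
definition B_FTR :: "nat \<Rightarrow> real mat \<Rightarrow> real mat \<Rightarrow> real mat list" where
  "B_FTR n L U = map (Lr n L) [1..<n] @ map (Ur n U) (rev [0..<n-1])"

definition B_sGS :: "nat \<Rightarrow> real mat \<Rightarrow> real mat \<Rightarrow> real mat" where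
  "B_sGS n L U = inv_mat (1\<^sub>m n - U) * L * inv_mat (1\<^sub>m n - L) * U"

end

theory Submission
  imports Defs
begin

text \<open>Write an eigenvector \<open>x\<close> of \<open>T(\<B>)\<close> for \<open>\<lambda> \<noteq> 0\<close> block by block: \<open>\<U>x = \<lambda>(I - \<L>)x\<close>
  says that \<open>x\<^sub>p = (\<Sum>q<p. B\<^sub>q x\<^sub>q) + \<lambda>\<^sup>-\<^sup>1 (\<Sum>q\<ge>p. B\<^sub>q x\<^sub>q)\<close>. In the splittings FTC and
  FTR the pieces of \<open>L\<close> satisfy \<open>B\<^sub>q B\<^sub>r = 0\<close> for \<open>q \<le> r\<close>, and so do the pieces of \<open>U\<close>.
  Hence \<open>B\<^sub>q x\<^sub>q\<close> only sees the right-hand side at the end of its half of the splitting: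
  \<open>B\<^sub>q x\<^sub>q = B\<^sub>q a\<close> for the pieces of \<open>L\<close> and \<open>B\<^sub>q x\<^sub>q = B\<^sub>q b\<close> for those of \<open>U\<close>, where
  \<open>a = La + \<lambda>\<^sup>-\<^sup>1 Ub\<close> and \<open>b = La + Ub\<close>. These two equations say exactly that \<open>b\<close> is an
  eigenvector of \<open>(I - U)\<^sup>-\<^sup>1 L (I - L)\<^sup>-\<^sup>1 U\<close> for \<open>\<lambda>\<close>, and conversely such a pair
  rebuilds the block eigenvector.\<close>

lemma inv_mat_inverse:
  assumes A: "A \<in> carrier_mat n n" and det: "det A \<noteq> 0"
  shows "inv_mat A \<in> carrier_mat n n" "A * inv_mat A = 1\<^sub>m n" "inv_mat A * A = 1\<^sub>m n"
proof -
  obtain B where B: "B \<in> carrier_mat n n" "A * B = 1\<^sub>m n" "B * A = 1\<^sub>m n"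
    using det_non_zero_imp_unit[OF A det] unfolding Units_def ring_mat_def by auto
  have "inv_mat A \<in> carrier_mat n n \<and> A * inv_mat A = 1\<^sub>m n \<and> inv_mat A * A = 1\<^sub>m n"
    unfolding inv_mat_def carrier_matD(1)[OF A]
    by (rule someI[of "\<lambda>B. B \<in> carrier_mat n n \<and> A * B = 1\<^sub>m n \<and> B * A = 1\<^sub>m n"], use B in auto)
  then show "inv_mat A \<in> carrier_mat n n" "A * inv_mat A = 1\<^sub>m n" "inv_mat A * A = 1\<^sub>m n"
    by auto
qed

lemma det_one_minus_strictly_lower:
  fixes A :: "'a :: comm_ring_1 mat"
  assumes A: "A \<in> carrier_mat n n"
    and lower: "\<And>i j. i < n \<Longrightarrow> j < n \<Longrightarrow> i \<le> j \<Longrightarrow> A $$ (i,j) = 0"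
  shows "det (1\<^sub>m n - A) = 1"
proof -
  have "det (1\<^sub>m n - A) = prod_list (diag_mat (1\<^sub>m n - A))"
    by (rule det_lower_triangular[of n]) (use A lower in auto)
  also have "diag_mat (1\<^sub>m n - A) = map (\<lambda>_. 1) [0..<n]"
    using A lower by (auto simp: diag_mat_def)
  finally show ?thesis
    by (simp add: map_replicate_const)
qed

lemma det_one_minus_strictly_upper:
  fixes A :: "'a :: comm_ring_1 mat"
  assumes A: "A \<in> carrier_mat n n"
    and upper: "\<And>i j. i < n \<Longrightarrow> j < n \<Longrightarrow> j \<le> i \<Longrightarrow> A $$ (i,j) = 0"
  shows "det (1\<^sub>m n - A) = 1"
proof -
  have I: "1\<^sub>m n - A \<in> carrier_mat n n"
    by (rule minus_carrier_mat[OF A])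
  have "det (1\<^sub>m n - A) = det ((1\<^sub>m n - A)\<^sup>T)"
    by (rule det_transpose[OF I, symmetric])
  also have "\<dots> = det (1\<^sub>m n - A\<^sup>T)"
    using A by (simp add: transpose_minus[OF one_carrier_mat A])
  also have "\<dots> = 1"
    by (rule det_one_minus_strictly_lower) (use A upper in auto)
  finally show ?thesis .
qed

lemma of_real_inv_mat:
  fixes A :: "real mat"
  assumes A: "A \<in> carrier_mat n n" and det: "det A \<noteq> 0"
  shows "map_mat complex_of_real (inv_mat A) * map_mat complex_of_real A = 1\<^sub>m n"
    and "map_mat complex_of_real A * map_mat complex_of_real (inv_mat A) = 1\<^sub>m n"
  using of_real_hom.mat_hom_mult[OF inv_mat_inverse(1)[OF A det] A, symmetric]
    of_real_hom.mat_hom_mult[OF A inv_mat_inverse(1)[OF A det], symmetric]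
  by (simp_all add: inv_mat_inverse[OF A det] of_real_hom.mat_hom_one)

lemma eigenvalue_inv_mult_iff:
  fixes A A' B :: "'a :: field mat"
  assumes A: "A \<in> carrier_mat n n" and A': "A' \<in> carrier_mat n n" and B: "B \<in> carrier_mat n n"
    and left: "A' * A = 1\<^sub>m n" and right: "A * A' = 1\<^sub>m n"
  shows "eigenvalue (A' * B) lam \<longleftrightarrow> (\<exists>x\<in>carrier_vec n. x \<noteq> 0\<^sub>v n \<and> B *\<^sub>v x = lam \<cdot>\<^sub>v (A *\<^sub>v x))"
proof -
  have "A' * B *\<^sub>v x = lam \<cdot>\<^sub>v x \<longleftrightarrow> B *\<^sub>v x = lam \<cdot>\<^sub>v (A *\<^sub>v x)" if x: "x \<in> carrier_vec n" for x
  proof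
    assume ev: "A' * B *\<^sub>v x = lam \<cdot>\<^sub>v x"
    have "B *\<^sub>v x = (A * A') *\<^sub>v (B *\<^sub>v x)"
      using right B x by simp
    also have "\<dots> = A *\<^sub>v (A' * B *\<^sub>v x)"
      using A A' B x by (simp add: assoc_mult_mat_vec)
    also have "\<dots> = lam \<cdot>\<^sub>v (A *\<^sub>v x)"
      using ev by (simp add: mult_mat_vec[OF A x])
    finally show "B *\<^sub>v x = lam \<cdot>\<^sub>v (A *\<^sub>v x)" .
  next
    assume ev: "B *\<^sub>v x = lam \<cdot>\<^sub>v (A *\<^sub>v x)"
    have "A' * B *\<^sub>v x = A' *\<^sub>v (lam \<cdot>\<^sub>v (A *\<^sub>v x))"
      using A' B x ev by (simp add: assoc_mult_mat_vec)
    also have "\<dots> = lam \<cdot>\<^sub>v ((A' * A) *\<^sub>v x)"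
      using A A' x by (simp add: mult_mat_vec assoc_mult_mat_vec)
    finally show "A' * B *\<^sub>v x = lam \<cdot>\<^sub>v x"
      using left x by simp
  qed
  then show ?thesis
    using A' unfolding eigenvalue_def eigenvector_def by auto
qed

lemma one_minus_mult_vec_eq_iff:
  fixes L :: "'a :: comm_ring_1 mat"
  assumes L: "L \<in> carrier_mat n n" and a: "a \<in> carrier_vec n" and w: "w \<in> carrier_vec n"
  shows "a = L *\<^sub>v a + w \<longleftrightarrow> (1\<^sub>m n - L) *\<^sub>v a = w"
  unfolding minus_mult_distrib_mat_vec[OF one_carrier_mat L a] one_mult_mat_vec[OF a]
  using L a w by (auto simp: vec_eq_iff algebra_simps)

lemma index_mult_mat_vec_sum:
  assumes "A \<in> carrier_mat nr n" and "v \<in> carrier_vec n" and "i < nr"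
  shows "(A *\<^sub>v v) $ i = (\<Sum>k<n. A $$ (i,k) * v $ k)"
  using assms by (auto simp: scalar_prod_def atLeast0LessThan intro!: sum.cong)

lemma mult_mat_vec_zero_vec: "A \<in> carrier_mat nr n \<Longrightarrow> A *\<^sub>v 0\<^sub>v n = 0\<^sub>v nr"
  by (intro eq_vecI) auto

lemma left_inverse_mult_mat_vec:
  fixes P A :: "'a :: semiring_1 mat"
  assumes "P \<in> carrier_mat n n" and "A \<in> carrier_mat n n" and "P * A = 1\<^sub>m n" and "v \<in> carrier_vec n"
  shows "P *\<^sub>v (A *\<^sub>v v) = v"
  using assoc_mult_mat_vec[OF assms(1,2,4)] assms(3) one_mult_mat_vec[OF assms(4)] by simp

lemma smult_vec_cancel:
  fixes lam :: "'a :: field"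
  assumes "lam \<noteq> 0" and "lam \<cdot>\<^sub>v x = lam \<cdot>\<^sub>v y"
  shows "x = y"
  using arg_cong[OF assms(2), of "\<lambda>v. inverse lam \<cdot>\<^sub>v v"] assms(1) by (simp add: smult_smult_assoc)

definition sweep :: "nat \<Rightarrow> nat \<Rightarrow> 'a :: field \<Rightarrow> (nat \<Rightarrow> 'a vec) \<Rightarrow> nat \<Rightarrow> 'a vec" where
  "sweep n d \<mu> C p = vec n (\<lambda>i. (\<Sum>q<p. C q $ i) + \<mu> * (\<Sum>q\<in>{p..<d}. C q $ i))"

lemma sweep_carrier [simp]: "sweep n d \<mu> C p \<in> carrier_vec n"
  by (simp add: sweep_def)

lemma sweep_cong:
  assumes "\<And>q. q < d \<Longrightarrow> C q = C' q" and "p \<le> d"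
  shows "sweep n d \<mu> C p = sweep n d \<mu> C' p"
  unfolding sweep_def using assms by (intro eq_vecI) auto

lemma sweep_0: "sweep n d \<mu> C 0 = \<mu> \<cdot>\<^sub>v sweep n d \<mu> C d"
  by (intro eq_vecI) (simp_all add: sweep_def atLeast0LessThan)

lemma index_sweep_eq_add:
  assumes qe: "q \<le> e" and ed: "e \<le> d" and k: "k < n"
  shows "sweep n d \<mu> C q $ k = sweep n d \<mu> C e $ k + (\<mu> - 1) * (\<Sum>r\<in>{q..<e}. C r $ k)"
proof -
  have "(\<Sum>r<e. C r $ k) = (\<Sum>r<q. C r $ k) + (\<Sum>r\<in>{q..<e}. C r $ k)"
    using sum.atLeastLessThan_concat[of 0 q e "\<lambda>r. C r $ k"] qe by (simp add: atLeast0LessThan)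
  moreover have "(\<Sum>r\<in>{q..<d}. C r $ k) = (\<Sum>r\<in>{q..<e}. C r $ k) + (\<Sum>r\<in>{e..<d}. C r $ k)"
    using sum.atLeastLessThan_concat[of q e d "\<lambda>r. C r $ k"] qe ed by simp
  ultimately show ?thesis
    using k by (simp add: sweep_def algebra_simps)
qed

text \<open>The two sweeps differ by \<open>(\<mu> - 1) (\<Sum>r\<in>{q..<e}. B\<^sub>r z\<^sub>r)\<close>, which \<open>B\<close> kills.\<close>
lemma mult_sweep_eq:
  fixes Bs :: "'a :: field mat list"
  assumes Bs: "\<And>r. r < length Bs \<Longrightarrow> Bs ! r \<in> carrier_mat n n"
    and z: "\<And>r. r < length Bs \<Longrightarrow> z r \<in> carrier_vec n"
    and C: "\<And>r. r < length Bs \<Longrightarrow> C r = Bs ! r *\<^sub>v z r"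
    and B: "B \<in> carrier_mat n n" and zero: "\<And>r. q \<le> r \<Longrightarrow> r < e \<Longrightarrow> B * Bs ! r = 0\<^sub>m n n"
    and qe: "q \<le> e" and ed: "e \<le> length Bs"
  shows "B *\<^sub>v sweep n (length Bs) \<mu> C q = B *\<^sub>v sweep n (length Bs) \<mu> C e"
proof (rule eq_vecI)
  fix i assume "i < dim_vec (B *\<^sub>v sweep n (length Bs) \<mu> C e)"
  then have i: "i < n"
    using B by simp
  have BC: "(B *\<^sub>v C r) $ i = 0" if "r \<in> {q..<e}" for r
  proof -
    have r: "r < length Bs"
      using that ed by auto
    have "B *\<^sub>v C r = (B * Bs ! r) *\<^sub>v z r"
      using assoc_mult_mat_vec[OF B Bs[OF r] z[OF r]] C[OF r] by simp
    then show ?thesis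
      using that zero i z[OF r] by simp
  qed
  have Cc: "C r \<in> carrier_vec n" if "r \<in> {q..<e}" for r
    using that ed C[of r] mult_mat_vec_carrier[OF Bs[of r] z[of r]] by simp
  have "(B *\<^sub>v sweep n (length Bs) \<mu> C q) $ i
      = (\<Sum>k<n. B $$ (i,k) * (sweep n (length Bs) \<mu> C e $ k + (\<mu> - 1) * (\<Sum>r\<in>{q..<e}. C r $ k)))"
    by (simp add: index_mult_mat_vec_sum[OF B sweep_carrier i] index_sweep_eq_add[OF qe ed])
  also have "\<dots> = (\<Sum>k<n. B $$ (i,k) * sweep n (length Bs) \<mu> C e $ k)
      + (\<mu> - 1) * (\<Sum>k<n. \<Sum>r\<in>{q..<e}. B $$ (i,k) * C r $ k)"
    by (simp add: distrib_left sum.distrib sum_distrib_left mult.left_commute)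
  also have "(\<Sum>k<n. \<Sum>r\<in>{q..<e}. B $$ (i,k) * C r $ k) = (\<Sum>r\<in>{q..<e}. \<Sum>k<n. B $$ (i,k) * C r $ k)"
    by (rule sum.swap)
  also have "\<dots> = (\<Sum>r\<in>{q..<e}. (B *\<^sub>v C r) $ i)"
    using index_mult_mat_vec_sum[OF B Cc i] by simp
  also have "\<dots> = 0"
    using BC by simp
  finally show "(B *\<^sub>v sweep n (length Bs) \<mu> C q) $ i = (B *\<^sub>v sweep n (length Bs) \<mu> C e) $ i"
    by (simp add: index_mult_mat_vec_sum[OF B sweep_carrier i])
qed (use B in simp)

section \<open>Splittings whose pieces annihilate later pieces\<close>

definition sums_to :: "nat \<Rightarrow> 'a :: comm_monoid_add mat list \<Rightarrow> 'a mat \<Rightarrow> bool" where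
  "sums_to n Bs B \<longleftrightarrow> (\<forall>i<n. \<forall>j<n. B $$ (i,j) = (\<Sum>q<length Bs. Bs ! q $$ (i,j)))"

definition annihilates_later :: "nat \<Rightarrow> 'a :: semiring_0 mat list \<Rightarrow> bool" where
  "annihilates_later n Bs \<longleftrightarrow> (\<forall>q r. q \<le> r \<longrightarrow> r < length Bs \<longrightarrow> Bs ! q * Bs ! r = 0\<^sub>m n n)"

text \<open>\<open>Y p\<close> is block \<open>p\<close> of a nonzero \<open>x\<close> with \<open>\<U>x = \<lambda>(I - \<L>)x\<close>, i.e. of an eigenvector of
  \<open>T(Bs)\<close> for \<open>\<lambda> \<noteq> 0\<close>.\<close>
definition block_eigenvector :: "nat \<Rightarrow> 'a :: field mat list \<Rightarrow> 'a \<Rightarrow> (nat \<Rightarrow> 'a vec) \<Rightarrow> bool" where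
  "block_eigenvector n Bs lam Y \<longleftrightarrow> (\<exists>p<length Bs. Y p \<noteq> 0\<^sub>v n) \<and>
     (\<forall>p<length Bs. Y p = sweep n (length Bs) (inverse lam) (\<lambda>q. Bs ! q *\<^sub>v Y q) p)"

text \<open>\<open>b\<close> is an eigenvector of \<open>(I - U)\<^sup>-\<^sup>1 L (I - L)\<^sup>-\<^sup>1 U\<close> for \<open>\<lambda>\<close> and \<open>a = \<lambda>\<^sup>-\<^sup>1 (I - L)\<^sup>-\<^sup>1 U b\<close>.\<close>
definition sgs_eigenpair :: "nat \<Rightarrow> 'a :: field mat \<Rightarrow> 'a mat \<Rightarrow> 'a \<Rightarrow> 'a vec \<Rightarrow> 'a vec \<Rightarrow> bool" where
  "sgs_eigenpair n L U lam a b \<longleftrightarrow> a \<in> carrier_vec n \<and> b \<in> carrier_vec n \<and> b \<noteq> 0\<^sub>v n \<and>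
     a = L *\<^sub>v a + inverse lam \<cdot>\<^sub>v (U *\<^sub>v b) \<and> b = L *\<^sub>v a + U *\<^sub>v b"

lemma index_mult_mat_vec_sums_to:
  assumes B: "B \<in> carrier_mat n n" "sums_to n Bs B"
    and Bs: "\<And>q. q < length Bs \<Longrightarrow> Bs ! q \<in> carrier_mat n n"
    and v: "v \<in> carrier_vec n" and i: "i < n"
  shows "(B *\<^sub>v v) $ i = (\<Sum>q<length Bs. (Bs ! q *\<^sub>v v) $ i)"
proof -
  have "(B *\<^sub>v v) $ i = (\<Sum>k<n. (\<Sum>q<length Bs. Bs ! q $$ (i,k)) * v $ k)"
    using B(2) i unfolding index_mult_mat_vec_sum[OF B(1) v i] sums_to_def by simp
  also have "\<dots> = (\<Sum>q<length Bs. \<Sum>k<n. Bs ! q $$ (i,k) * v $ k)"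
    by (simp add: sum_distrib_right) (rule sum.swap)
  also have "\<dots> = (\<Sum>q<length Bs. (Bs ! q *\<^sub>v v) $ i)"
  proof (rule sum.cong[OF refl])
    fix q assume "q \<in> {..<length Bs}"
    then show "(\<Sum>k<n. Bs ! q $$ (i,k) * v $ k) = (Bs ! q *\<^sub>v v) $ i"
      using index_mult_mat_vec_sum[OF Bs[of q] v i] by simp
  qed
  finally show ?thesis .
qed

lemma sweep_append_pieces:
  fixes Ps Qs :: "'a :: field mat list"
  assumes pieces: "\<And>B. B \<in> set (Ps @ Qs) \<Longrightarrow> B \<in> carrier_mat n n"
    and L: "L \<in> carrier_mat n n" "sums_to n Ps L" and U: "U \<in> carrier_mat n n" "sums_to n Qs U"
    and a: "a \<in> carrier_vec n" and b: "b \<in> carrier_vec n"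
    and C: "\<And>q. q < length (Ps @ Qs) \<Longrightarrow>
      C q = (if q < length Ps then Ps ! q *\<^sub>v a else Qs ! (q - length Ps) *\<^sub>v b)"
  shows "sweep n (length (Ps @ Qs)) \<mu> C (length Ps) = L *\<^sub>v a + \<mu> \<cdot>\<^sub>v (U *\<^sub>v b)"
    and "sweep n (length (Ps @ Qs)) \<mu> C (length (Ps @ Qs)) = L *\<^sub>v a + U *\<^sub>v b"
proof -
  let ?m = "length Ps" and ?d = "length (Ps @ Qs)"
  have P: "Ps ! q \<in> carrier_mat n n" if "q < length Ps" for q
    using pieces that by simp
  have Q: "Qs ! q \<in> carrier_mat n n" if "q < length Qs" for q
    using pieces that by simp
  have SL: "(\<Sum>q<?m. C q $ i) = (L *\<^sub>v a) $ i" if i: "i < n" for i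
  proof -
    have "(\<Sum>q<?m. C q $ i) = (\<Sum>q<?m. (Ps ! q *\<^sub>v a) $ i)"
      using C by (intro sum.cong) auto
    then show ?thesis
      using index_mult_mat_vec_sums_to[OF L P a i] by simp
  qed
  have SU: "(\<Sum>q\<in>{?m..<?d}. C q $ i) = (U *\<^sub>v b) $ i" if i: "i < n" for i
  proof -
    have "(\<Sum>q\<in>{?m..<?d}. C q $ i) = (\<Sum>q\<in>{0 + ?m..<length Qs + ?m}. C q $ i)"
      by (simp add: add.commute)
    also have "\<dots> = (\<Sum>q<length Qs. C (q + ?m) $ i)"
      by (simp only: sum.shift_bounds_nat_ivl atLeast0LessThan)
    also have "\<dots> = (\<Sum>q<length Qs. (Qs ! q *\<^sub>v b) $ i)"
      using C by (intro sum.cong) auto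
    finally show ?thesis
      using index_mult_mat_vec_sums_to[OF U Q b i] by simp
  qed
  show "sweep n ?d \<mu> C ?m = L *\<^sub>v a + \<mu> \<cdot>\<^sub>v (U *\<^sub>v b)"
    by (rule eq_vecI) (use SL SU L U a b in \<open>simp_all add: sweep_def\<close>)
  have "(\<Sum>q<?d. C q $ i) = (\<Sum>q<?m. C q $ i) + (\<Sum>q\<in>{?m..<?d}. C q $ i)" for i
    using sum.atLeastLessThan_concat[of 0 ?m ?d "\<lambda>q. C q $ i"] by (simp add: atLeast0LessThan)
  then show "sweep n ?d \<mu> C ?d = L *\<^sub>v a + U *\<^sub>v b"
    by (intro eq_vecI) (use SL SU L U a b in \<open>simp_all add: sweep_def\<close>)
qed

lemma mult_sweep_append:
  fixes Ps Qs :: "'a :: field mat list"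
  assumes pieces: "\<And>B. B \<in> set (Ps @ Qs) \<Longrightarrow> B \<in> carrier_mat n n"
    and ann: "annihilates_later n Ps" "annihilates_later n Qs"
    and z: "\<And>r. r < length (Ps @ Qs) \<Longrightarrow> z r \<in> carrier_vec n"
    and C: "\<And>r. r < length (Ps @ Qs) \<Longrightarrow> C r = (Ps @ Qs) ! r *\<^sub>v z r"
    and q: "q < length (Ps @ Qs)"
  shows "(Ps @ Qs) ! q *\<^sub>v sweep n (length (Ps @ Qs)) \<mu> C q
    = (Ps @ Qs) ! q *\<^sub>v sweep n (length (Ps @ Qs)) \<mu> C (if q < length Ps then length Ps else length (Ps @ Qs))"
proof -
  have Bs: "\<And>r. r < length (Ps @ Qs) \<Longrightarrow> (Ps @ Qs) ! r \<in> carrier_mat n n"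
    using pieces nth_mem by blast
  show ?thesis
    by (rule mult_sweep_eq[OF Bs z C]) (use Bs q ann in \<open>auto simp: nth_append annihilates_later_def\<close>)
qed

lemma block_eigenvector_imp_sgs_eigenpair:
  fixes Ps Qs :: "'a :: field mat list"
  assumes pieces: "\<And>B. B \<in> set (Ps @ Qs) \<Longrightarrow> B \<in> carrier_mat n n"
    and L: "L \<in> carrier_mat n n" "sums_to n Ps L" and U: "U \<in> carrier_mat n n" "sums_to n Qs U"
    and ann: "annihilates_later n Ps" "annihilates_later n Qs"
    and Pl: "Pl \<in> carrier_mat n n" "Pl * (1\<^sub>m n - L) = 1\<^sub>m n"
    and Y: "block_eigenvector n (Ps @ Qs) lam Y"
  shows "\<exists>a b. sgs_eigenpair n L U lam a b"
proof -
  define Bs where "Bs = Ps @ Qs"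
  define m where "m = length Ps"
  define d where "d = length Bs"
  define C where "C q = Bs ! q *\<^sub>v Y q" for q
  define a where "a = sweep n d (inverse lam) C m"
  define b where "b = sweep n d (inverse lam) C d"
  have Y_sweep: "Y q = sweep n d (inverse lam) C q" if "q < d" for q
    using Y that unfolding block_eigenvector_def C_def Bs_def d_def by auto
  have C_pieces: "C q = (if q < m then Ps ! q *\<^sub>v a else Qs ! (q - m) *\<^sub>v b)" if q: "q < d" for q
  proof -
    have "C q = Bs ! q *\<^sub>v sweep n d (inverse lam) C q"
      using Y_sweep[OF q] unfolding C_def by simp
    also have "\<dots> = Bs ! q *\<^sub>v sweep n d (inverse lam) C (if q < m then m else d)"
      unfolding Bs_def m_def d_def
      by (rule mult_sweep_append[where z = Y]) (use pieces ann Y_sweep q in \<open>auto simp: C_def Bs_def d_def\<close>)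
    finally show ?thesis
      using q unfolding a_def b_def by (cases "q < m") (simp_all add: Bs_def m_def nth_append)
  qed
  have ab: "a \<in> carrier_vec n" "b \<in> carrier_vec n"
    unfolding a_def b_def by simp_all
  note sweeps = sweep_append_pieces[OF pieces L U ab, of C "inverse lam"]
  have eqs: "a = L *\<^sub>v a + inverse lam \<cdot>\<^sub>v (U *\<^sub>v b)" "b = L *\<^sub>v a + U *\<^sub>v b"
    using sweeps C_pieces unfolding a_def b_def m_def d_def Bs_def by auto
  have "b \<noteq> 0\<^sub>v n"
  proof
    assume b0: "b = 0\<^sub>v n"
    then have "inverse lam \<cdot>\<^sub>v (U *\<^sub>v b) = 0\<^sub>v n"
      using U(1) by (intro eq_vecI) (simp_all add: mult_mat_vec_zero_vec)
    then have La: "(1\<^sub>m n - L) *\<^sub>v a = 0\<^sub>v n"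
      using eqs(1) one_minus_mult_vec_eq_iff[OF L(1) ab(1), of "0\<^sub>v n"] by simp
    have "a = Pl *\<^sub>v ((1\<^sub>m n - L) *\<^sub>v a)"
      using left_inverse_mult_mat_vec[OF Pl(1) minus_carrier_mat[OF L(1)] Pl(2) ab(1)] by simp
    then have a0: "a = 0\<^sub>v n"
      using La mult_mat_vec_zero_vec[OF Pl(1)] by simp
    have "C q = 0\<^sub>v n" if "q < d" for q
      using C_pieces[OF that] a0 b0 pieces that
      by (auto simp: mult_mat_vec_zero_vec m_def d_def Bs_def)
    then have "Y p = 0\<^sub>v n" if "p < d" for p
      using that unfolding Y_sweep[OF that] by (intro eq_vecI) (auto simp: sweep_def)
    then show False
      using Y unfolding block_eigenvector_def Bs_def d_def by auto
  qed
  then show ?thesis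
    using ab eqs unfolding sgs_eigenpair_def by blast
qed

lemma sgs_eigenpair_imp_block_eigenvector:
  fixes Ps Qs :: "'a :: field mat list"
  assumes pieces: "\<And>B. B \<in> set (Ps @ Qs) \<Longrightarrow> B \<in> carrier_mat n n"
    and L: "L \<in> carrier_mat n n" "sums_to n Ps L" and U: "U \<in> carrier_mat n n" "sums_to n Qs U"
    and ann: "annihilates_later n Ps" "annihilates_later n Qs"
    and lam: "lam \<noteq> 0" and ab: "sgs_eigenpair n L U lam a b"
  shows "\<exists>Y. block_eigenvector n (Ps @ Qs) lam Y"
proof -
  define Bs where "Bs = Ps @ Qs"
  define m where "m = length Ps"
  define d where "d = length Bs"
  define z where "z q = (if q < m then a else b)" for q
  define C where "C q = Bs ! q *\<^sub>v z q" for q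
  define Y where "Y p = sweep n d (inverse lam) C p" for p
  have a: "a \<in> carrier_vec n" and b: "b \<in> carrier_vec n" "b \<noteq> 0\<^sub>v n"
    using ab unfolding sgs_eigenpair_def by auto
  have C_pieces: "C q = (if q < m then Ps ! q *\<^sub>v a else Qs ! (q - m) *\<^sub>v b)" if "q < d" for q
    using that unfolding C_def z_def by (simp add: Bs_def m_def nth_append)
  note sweeps = sweep_append_pieces[OF pieces L U a b(1), of C "inverse lam"]
  have Y_m: "Y m = a" and Y_d: "Y d = b"
    using sweeps C_pieces ab unfolding Y_def sgs_eigenpair_def m_def d_def Bs_def by auto
  have BY: "Bs ! q *\<^sub>v Y q = C q" if q: "q < d" for q
  proof -
    have "Bs ! q *\<^sub>v Y q = Bs ! q *\<^sub>v Y (if q < m then m else d)"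
      unfolding Y_def Bs_def m_def d_def
      by (rule mult_sweep_append[where z = z]) (use pieces ann a b q in \<open>auto simp: C_def z_def Bs_def d_def\<close>)
    then show ?thesis
      using Y_m Y_d by (cases "q < m") (simp_all add: C_def z_def)
  qed
  obtain i where i: "i < n" "b $ i \<noteq> 0"
    using b by (auto simp: vec_eq_iff)
  have "Y 0 = inverse lam \<cdot>\<^sub>v b"
    using sweep_0[of n d "inverse lam" C] Y_d unfolding Y_def by simp
  then have Y0: "Y 0 $ i \<noteq> 0"
    using i b(1) lam by simp
  have "d \<noteq> 0"
  proof
    assume "d = 0"
    with Y0 i show False
      unfolding Y_def sweep_def by simp
  qed
  moreover have "Y 0 \<noteq> 0\<^sub>v n"
    using Y0 i by auto
  moreover have "Y p = sweep n d (inverse lam) (\<lambda>q. Bs ! q *\<^sub>v Y q) p" if "p < d" for p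
  proof -
    have "Y p = sweep n d (inverse lam) C p"
      by (simp add: Y_def)
    also have "\<dots> = sweep n d (inverse lam) (\<lambda>q. Bs ! q *\<^sub>v Y q) p"
      using BY that by (intro sweep_cong) auto
    finally show ?thesis .
  qed
  ultimately have "block_eigenvector n Bs lam Y"
    unfolding block_eigenvector_def d_def by auto
  then show ?thesis
    unfolding Bs_def by blast
qed

lemma sgs_eigenpair_iff:
  assumes L: "L \<in> carrier_mat n n" and U: "U \<in> carrier_mat n n"
  shows "sgs_eigenpair n L U lam a b \<longleftrightarrow> a \<in> carrier_vec n \<and> b \<in> carrier_vec n \<and> b \<noteq> 0\<^sub>v n \<and>
      (1\<^sub>m n - L) *\<^sub>v a = inverse lam \<cdot>\<^sub>v (U *\<^sub>v b) \<and> (1\<^sub>m n - U) *\<^sub>v b = L *\<^sub>v a"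
proof (cases "a \<in> carrier_vec n \<and> b \<in> carrier_vec n")
  case True
  then have "b = L *\<^sub>v a + U *\<^sub>v b \<longleftrightarrow> b = U *\<^sub>v b + L *\<^sub>v a"
    using L U by (simp add: comm_add_vec[of "L *\<^sub>v a" n])
  then show ?thesis
    using True L U unfolding sgs_eigenpair_def
    by (simp add: one_minus_mult_vec_eq_iff[OF L] one_minus_mult_vec_eq_iff[OF U])
qed (auto simp: sgs_eigenpair_def)

lemma eigenvalue_sgs_iff:
  fixes L U Pl Pu :: "'a :: field mat"
  assumes L: "L \<in> carrier_mat n n" and U: "U \<in> carrier_mat n n"
    and Pl: "Pl \<in> carrier_mat n n" "Pl * (1\<^sub>m n - L) = 1\<^sub>m n" "(1\<^sub>m n - L) * Pl = 1\<^sub>m n"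
    and Pu: "Pu \<in> carrier_mat n n" "Pu * (1\<^sub>m n - U) = 1\<^sub>m n" "(1\<^sub>m n - U) * Pu = 1\<^sub>m n"
    and lam: "lam \<noteq> 0"
  shows "eigenvalue (Pu * L * Pl * U) lam \<longleftrightarrow> (\<exists>a b. sgs_eigenpair n L U lam a b)"
proof -
  have IL: "1\<^sub>m n - L \<in> carrier_mat n n" and IU: "1\<^sub>m n - U \<in> carrier_mat n n"
    using L U by auto
  have factor: "Pu * L * Pl * U *\<^sub>v x = Pu *\<^sub>v (L *\<^sub>v (Pl *\<^sub>v (U *\<^sub>v x)))"
    if x: "x \<in> carrier_vec n" for x
  proof -
    have "Pu * L * Pl * U *\<^sub>v x = (Pu * L * Pl) *\<^sub>v (U *\<^sub>v x)"
      using Pu L Pl U x by (intro assoc_mult_mat_vec) auto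
    also have "\<dots> = (Pu * L) *\<^sub>v (Pl *\<^sub>v (U *\<^sub>v x))"
      using Pu L Pl U x by (intro assoc_mult_mat_vec) auto
    also have "\<dots> = Pu *\<^sub>v (L *\<^sub>v (Pl *\<^sub>v (U *\<^sub>v x)))"
      using Pu L Pl U x by (intro assoc_mult_mat_vec) auto
    finally show ?thesis .
  qed
  show ?thesis
  proof
    assume "eigenvalue (Pu * L * Pl * U) lam"
    then obtain b where b: "b \<in> carrier_vec n" "b \<noteq> 0\<^sub>v n" and ev: "Pu * L * Pl * U *\<^sub>v b = lam \<cdot>\<^sub>v b"
      using Pu unfolding eigenvalue_def eigenvector_def by auto
    define w where "w = Pl *\<^sub>v (U *\<^sub>v b)"
    define a where "a = inverse lam \<cdot>\<^sub>v w"
    have w: "w \<in> carrier_vec n" and a: "a \<in> carrier_vec n"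
      unfolding w_def a_def using Pl U b by auto
    have "(1\<^sub>m n - L) *\<^sub>v a = inverse lam \<cdot>\<^sub>v ((1\<^sub>m n - L) *\<^sub>v w)"
      unfolding a_def using IL w by (simp add: mult_mat_vec)
    also have "(1\<^sub>m n - L) *\<^sub>v w = U *\<^sub>v b"
      unfolding w_def using left_inverse_mult_mat_vec[OF IL Pl(1) Pl(3)] U b by simp
    finally have eq1: "(1\<^sub>m n - L) *\<^sub>v a = inverse lam \<cdot>\<^sub>v (U *\<^sub>v b)" .
    have "lam \<cdot>\<^sub>v ((1\<^sub>m n - U) *\<^sub>v b) = (1\<^sub>m n - U) *\<^sub>v (Pu *\<^sub>v (L *\<^sub>v w))"
      using ev factor[OF b(1)] IU b unfolding w_def by (simp add: mult_mat_vec)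
    also have "\<dots> = lam \<cdot>\<^sub>v (L *\<^sub>v a)"
      using left_inverse_mult_mat_vec[OF IU Pu(1) Pu(3), of "L *\<^sub>v w"] L w lam unfolding a_def
      by (simp add: mult_mat_vec smult_smult_assoc)
    finally have "(1\<^sub>m n - U) *\<^sub>v b = L *\<^sub>v a"
      by (rule smult_vec_cancel[OF lam])
    then show "\<exists>a b. sgs_eigenpair n L U lam a b"
      using sgs_eigenpair_iff[OF L U] a b eq1 by blast
  next
    assume "\<exists>a b. sgs_eigenpair n L U lam a b"
    then obtain a b where a: "a \<in> carrier_vec n" and b: "b \<in> carrier_vec n" "b \<noteq> 0\<^sub>v n"
      and eq1: "(1\<^sub>m n - L) *\<^sub>v a = inverse lam \<cdot>\<^sub>v (U *\<^sub>v b)" and eq2: "(1\<^sub>m n - U) *\<^sub>v b = L *\<^sub>v a"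
      using sgs_eigenpair_iff[OF L U] by blast
    have "U *\<^sub>v b = lam \<cdot>\<^sub>v ((1\<^sub>m n - L) *\<^sub>v a)"
      using eq1 lam by (simp add: smult_smult_assoc)
    then have "Pl *\<^sub>v (U *\<^sub>v b) = lam \<cdot>\<^sub>v a"
      using left_inverse_mult_mat_vec[OF Pl(1) IL Pl(2) a] Pl(1) IL a by (simp add: mult_mat_vec)
    then have "Pu * L * Pl * U *\<^sub>v b = lam \<cdot>\<^sub>v (Pu *\<^sub>v ((1\<^sub>m n - U) *\<^sub>v b))"
      using factor[OF b(1)] eq2 Pu L a by (simp add: mult_mat_vec)
    also have "\<dots> = lam \<cdot>\<^sub>v b"
      using left_inverse_mult_mat_vec[OF Pu(1) IU Pu(2) b(1)] by simp
    finally show "eigenvalue (Pu * L * Pl * U) lam"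
      using b Pu unfolding eigenvalue_def eigenvector_def by auto
  qed
qed

lemma block_eigenvector_iff_sgs_eigenpair:
  fixes Ps Qs :: "'a :: field mat list"
  assumes pieces: "\<And>B. B \<in> set (Ps @ Qs) \<Longrightarrow> B \<in> carrier_mat n n"
    and L: "L \<in> carrier_mat n n" "sums_to n Ps L" and U: "U \<in> carrier_mat n n" "sums_to n Qs U"
    and ann: "annihilates_later n Ps" "annihilates_later n Qs"
    and Pl: "Pl \<in> carrier_mat n n" "Pl * (1\<^sub>m n - L) = 1\<^sub>m n" and lam: "lam \<noteq> 0"
  shows "(\<exists>Y. block_eigenvector n (Ps @ Qs) lam Y) \<longleftrightarrow> (\<exists>a b. sgs_eigenpair n L U lam a b)"
  using block_eigenvector_imp_sgs_eigenpair[OF pieces L U ann Pl]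
    sgs_eigenpair_imp_block_eigenvector[OF pieces L U ann lam] by blast

section \<open>The iteration matrix in block form\<close>

definition vec_block :: "nat \<Rightarrow> 'a vec \<Rightarrow> nat \<Rightarrow> 'a vec" where
  "vec_block n x p = vec n (\<lambda>i. x $ (p * n + i))"

lemma block_index_less:
  fixes p d i n :: nat
  assumes "p < d" and "i < n"
  shows "p * n + i < d * n"
proof -
  have "p * n + i < Suc p * n"
    using assms(2) by simp
  also have "\<dots> \<le> d * n"
    using assms(1) by (intro mult_le_mono1) simp
  finally show ?thesis .
qed

lemma vec_eq_iff_vec_block:
  assumes x: "x \<in> carrier_vec (d * n)" and y: "y \<in> carrier_vec (d * n)"
  shows "x = y \<longleftrightarrow> (\<forall>p<d. vec_block n x p = vec_block n y p)"
proof
  assume blocks: "\<forall>p<d. vec_block n x p = vec_block n y p"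
  show "x = y"
  proof (rule eq_vecI)
    fix j assume "j < dim_vec y"
    then have j: "j < d * n"
      using y by simp
    then have n: "0 < n"
      by (cases n) auto
    have "j div n < d" "j mod n < n"
      using j n by (auto simp: less_mult_imp_div_less)
    then have "vec_block n x (j div n) $ (j mod n) = vec_block n y (j div n) $ (j mod n)"
      using blocks by simp
    then show "x $ j = y $ j"
      using \<open>j mod n < n\<close> by (simp add: vec_block_def)
  qed (use x y in simp)
qed simp

lemma vec_block_zero: "p < d \<Longrightarrow> vec_block n (0\<^sub>v (d * n)) p = 0\<^sub>v n"
  using block_index_less[of p d _ n] by (intro eq_vecI) (auto simp: vec_block_def)

lemma vec_block_of_blocks:
  assumes p: "p < d" and Y: "Y p \<in> carrier_vec n"
  shows "vec_block n (vec (d * n) (\<lambda>j. Y (j div n) $ (j mod n))) p = Y p"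
proof (rule eq_vecI)
  fix i assume "i < dim_vec (Y p)"
  then have i: "i < n"
    using Y by simp
  then show "vec_block n (vec (d * n) (\<lambda>j. Y (j div n) $ (j mod n))) p $ i = Y p $ i"
    using block_index_less[OF p i] by (simp add: vec_block_def)
qed (use Y in \<open>simp add: vec_block_def\<close>)

lemma sum_lessThan_mult:
  fixes d n :: nat
  shows "(\<Sum>j<d * n. f j) = (\<Sum>p<d. \<Sum>i<n. f (p * n + i))"
proof (induction d)
  case (Suc d)
  have split: "{..<Suc d * n} = {..<d * n} \<union> {d * n..<d * n + n}"
    by auto
  have "(\<Sum>j<Suc d * n. f j) = (\<Sum>j<d * n. f j) + (\<Sum>j\<in>{d * n..<d * n + n}. f j)"
    unfolding split by (rule sum.union_disjoint) auto
  also have "(\<Sum>j\<in>{d * n..<d * n + n}. f j) = (\<Sum>i<n. f (d * n + i))"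
    by (rule sum.reindex_bij_witness[of _ "\<lambda>i. d * n + i" "\<lambda>j. j - d * n"]) auto
  finally show ?case
    using Suc by simp
qed simp

lemma index_mult_mat_vec_blocks:
  assumes M: "M \<in> carrier_mat (d * n) (d * n)" and x: "x \<in> carrier_vec (d * n)"
    and p: "p < d" and i: "i < n"
  shows "(M *\<^sub>v x) $ (p * n + i) = (\<Sum>q<d. \<Sum>r<n. M $$ (p * n + i, q * n + r) * vec_block n x q $ r)"
  unfolding index_mult_mat_vec_sum[OF M x block_index_less[OF p i]] sum_lessThan_mult
  by (simp add: vec_block_def)

lemma index_of_real_block_mult:
  fixes Bs :: "real mat list"
  assumes Bs: "\<And>B. B \<in> set Bs \<Longrightarrow> B \<in> carrier_mat n n"
    and x: "x \<in> carrier_vec (length Bs * n)" and p: "p < length Bs" and i: "i < n"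
  shows "(map_mat complex_of_real (blockU n Bs) *\<^sub>v x) $ (p * n + i)
      = (\<Sum>q\<in>{p..<length Bs}. (map (map_mat complex_of_real) Bs ! q *\<^sub>v vec_block n x q) $ i)"
    and "(map_mat complex_of_real (blockL n Bs) *\<^sub>v x) $ (p * n + i)
      = (\<Sum>q<p. (map (map_mat complex_of_real) Bs ! q *\<^sub>v vec_block n x q) $ i)"
proof -
  let ?c = "map_mat complex_of_real" and ?d = "length Bs"
  define g where "g q = (map ?c Bs ! q *\<^sub>v vec_block n x q) $ i" for q
  have dm: "(a * n + b) div n = a" "(a * n + b) mod n = b" if "b < n" for a b
    using that by auto
  have block_sum: "(\<Sum>r<n. ?c M $$ (p * n + i, q * n + r) * vec_block n x q $ r) = (if R p q then g q else 0)"
    if q: "q < ?d" and M: "M = mat (?d * n) (?d * n)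
      (\<lambda>(j, k). if R (j div n) (k div n) then Bs ! (k div n) $$ (j mod n, k mod n) else 0)" for M R q
  proof -
    have Bq: "Bs ! q \<in> carrier_mat n n"
      using Bs q by simp
    have cBq: "?c (Bs ! q) \<in> carrier_mat n n" and xq: "vec_block n x q \<in> carrier_vec n"
      using Bq by (simp_all add: vec_block_def)
    have entry: "?c M $$ (p * n + i, q * n + r) = (if R p q then ?c (Bs ! q) $$ (i, r) else 0)"
      if r: "r < n" for r
      using block_index_less[OF p i] block_index_less[OF q r] i r Bq unfolding M by (simp add: dm)
    have "(\<Sum>r<n. ?c M $$ (p * n + i, q * n + r) * vec_block n x q $ r)
        = (\<Sum>r<n. (if R p q then ?c (Bs ! q) $$ (i, r) else 0) * vec_block n x q $ r)"
      by (rule sum.cong) (simp_all add: entry)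
    then show ?thesis
      unfolding g_def nth_map[OF q] index_mult_mat_vec_sum[OF cBq xq i] by (cases "R p q") simp_all
  qed
  have M: "?c M \<in> carrier_mat (?d * n) (?d * n)" if "M = mat (?d * n) (?d * n) f" for M f
    using that by simp
  have "(?c (blockU n Bs) *\<^sub>v x) $ (p * n + i) = (\<Sum>q<?d. if p \<le> q then g q else 0)"
    unfolding index_mult_mat_vec_blocks[OF M[OF blockU_def] x p i]
    by (intro sum.cong refl block_sum[where R = "(\<le>)"]) (auto simp: blockU_def)
  also have "\<dots> = sum g {q \<in> {..<?d}. p \<le> q}"
    by (rule sum.inter_filter[symmetric]) simp
  also have "{q \<in> {..<?d}. p \<le> q} = {p..<?d}"
    by auto
  finally show "(?c (blockU n Bs) *\<^sub>v x) $ (p * n + i) = (\<Sum>q\<in>{p..<?d}. (map ?c Bs ! q *\<^sub>v vec_block n x q) $ i)"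
    unfolding g_def .
  have "(?c (blockL n Bs) *\<^sub>v x) $ (p * n + i) = (\<Sum>q<?d. if q < p then g q else 0)"
    unfolding index_mult_mat_vec_blocks[OF M[OF blockL_def] x p i]
    by (intro sum.cong refl block_sum[where R = "\<lambda>p q. q < p"]) (auto simp: blockL_def)
  also have "\<dots> = sum g {q \<in> {..<?d}. q < p}"
    by (rule sum.inter_filter[symmetric]) simp
  also have "{q \<in> {..<?d}. q < p} = {..<p}"
    using p by auto
  finally show "(?c (blockL n Bs) *\<^sub>v x) $ (p * n + i) = (\<Sum>q<p. (map ?c Bs ! q *\<^sub>v vec_block n x q) $ i)"
    unfolding g_def .
qed

lemma eigenvalue_of_real_iter_mat_iff:
  fixes Bs :: "real mat list" and lam :: complex and n :: nat
  defines "N \<equiv> length Bs * n"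
  shows "eigenvalue (map_mat complex_of_real (iter_mat n Bs)) lam \<longleftrightarrow>
    (\<exists>x\<in>carrier_vec N. x \<noteq> 0\<^sub>v N \<and> map_mat complex_of_real (blockU n Bs) *\<^sub>v x
       = lam \<cdot>\<^sub>v (x - map_mat complex_of_real (blockL n Bs) *\<^sub>v x))"
proof -
  let ?c = "map_mat complex_of_real"
  have bL: "blockL n Bs \<in> carrier_mat N N" and bU: "blockU n Bs \<in> carrier_mat N N"
    unfolding blockL_def blockU_def N_def by simp_all
  define A where "A = 1\<^sub>m N - blockL n Bs"
  have A: "A \<in> carrier_mat N N"
    unfolding A_def by (rule minus_carrier_mat[OF bL])
  have "det A = 1"
    unfolding A_def
  proof (rule det_one_minus_strictly_lower[OF bL])
    fix j k assume "j < N" "k < N" "j \<le> k"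
    then show "blockL n Bs $$ (j, k) = 0"
      by (auto simp: blockL_def N_def div_le_mono leD)
  qed
  then have inv: "?c (inv_mat A) * ?c A = 1\<^sub>m N" "?c A * ?c (inv_mat A) = 1\<^sub>m N"
    using of_real_inv_mat[OF A] by simp_all
  have "?c (iter_mat n Bs) = ?c (inv_mat A) * ?c (blockU n Bs)"
    unfolding iter_mat_def N_def[symmetric] A_def[symmetric]
    using of_real_hom.mat_hom_mult[OF inv_mat_inverse(1)[OF A] bU] \<open>det A = 1\<close> by simp
  then have "eigenvalue (?c (iter_mat n Bs)) lam \<longleftrightarrow>
      (\<exists>x\<in>carrier_vec N. x \<noteq> 0\<^sub>v N \<and> ?c (blockU n Bs) *\<^sub>v x = lam \<cdot>\<^sub>v (?c A *\<^sub>v x))"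
    using eigenvalue_inv_mult_iff[OF _ _ _ inv, where lam = lam] A bU inv_mat_inverse(1)[OF A] \<open>det A = 1\<close>
    by simp
  also have "\<dots> \<longleftrightarrow> (\<exists>x\<in>carrier_vec N. x \<noteq> 0\<^sub>v N \<and> ?c (blockU n Bs) *\<^sub>v x
       = lam \<cdot>\<^sub>v (x - ?c (blockL n Bs) *\<^sub>v x))"
  proof (intro bex_cong refl)
    fix x :: "complex vec" assume x: "x \<in> carrier_vec N"
    have "?c A = 1\<^sub>m N - ?c (blockL n Bs)"
      unfolding A_def using bL by (intro eq_matI) auto
    then have "?c A *\<^sub>v x = x - ?c (blockL n Bs) *\<^sub>v x"
      using minus_mult_distrib_mat_vec[OF one_carrier_mat _ x, of "?c (blockL n Bs)"] bL x by simp
    then show "(x \<noteq> 0\<^sub>v N \<and> ?c (blockU n Bs) *\<^sub>v x = lam \<cdot>\<^sub>v (?c A *\<^sub>v x)) \<longleftrightarrow>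
        (x \<noteq> 0\<^sub>v N \<and> ?c (blockU n Bs) *\<^sub>v x = lam \<cdot>\<^sub>v (x - ?c (blockL n Bs) *\<^sub>v x))"
      by simp
  qed
  finally show ?thesis .
qed

lemma iter_equation_iff_sweep:
  fixes Bs :: "real mat list" and lam :: complex
  assumes Bs: "\<And>B. B \<in> set Bs \<Longrightarrow> B \<in> carrier_mat n n" and lam: "lam \<noteq> 0"
    and x: "x \<in> carrier_vec (length Bs * n)"
  shows "map_mat complex_of_real (blockU n Bs) *\<^sub>v x = lam \<cdot>\<^sub>v (x - map_mat complex_of_real (blockL n Bs) *\<^sub>v x)
    \<longleftrightarrow> (\<forall>p<length Bs. vec_block n x p
          = sweep n (length Bs) (inverse lam) (\<lambda>q. map (map_mat complex_of_real) Bs ! q *\<^sub>v vec_block n x q) p)"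
    (is "?U = lam \<cdot>\<^sub>v (x - ?L) \<longleftrightarrow> _")
proof -
  let ?d = "length Bs" and ?g = "\<lambda>q. map (map_mat complex_of_real) Bs ! q *\<^sub>v vec_block n x q"
  have "blockU n Bs \<in> carrier_mat (?d * n) (?d * n)" "blockL n Bs \<in> carrier_mat (?d * n) (?d * n)"
    unfolding blockU_def blockL_def by simp_all
  then have U: "?U \<in> carrier_vec (?d * n)" and L: "?L \<in> carrier_vec (?d * n)"
    using x by (auto intro!: mult_mat_vec_carrier)
  have blockwise: "vec_block n ?U p = vec_block n (lam \<cdot>\<^sub>v (x - ?L)) p \<longleftrightarrow>
      vec_block n x p = sweep n ?d (inverse lam) ?g p" if p: "p < ?d" for p
  proof -
    have component: "vec_block n ?U p $ i = vec_block n (lam \<cdot>\<^sub>v (x - ?L)) p $ i \<longleftrightarrow>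
        vec_block n x p $ i = sweep n ?d (inverse lam) ?g p $ i" if i: "i < n" for i
    proof -
      define X S1 S2 where "X = x $ (p * n + i)" and "S1 = (\<Sum>q<p. ?g q $ i)"
        and "S2 = (\<Sum>q\<in>{p..<?d}. ?g q $ i)"
      have j: "p * n + i < ?d * n"
        by (rule block_index_less[OF p i])
      have "vec_block n ?U p $ i = ?U $ (p * n + i)"
        using i by (simp add: vec_block_def)
      also have "\<dots> = S2"
        unfolding S2_def by (rule index_of_real_block_mult(1)[OF Bs x p i])
      finally have "vec_block n ?U p $ i = S2" .
      moreover have "vec_block n (lam \<cdot>\<^sub>v (x - ?L)) p $ i = lam * (X - ?L $ (p * n + i))"
        unfolding X_def using i j carrier_vecD[OF x] carrier_vecD[OF L] by (simp add: vec_block_def)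
      moreover have "?L $ (p * n + i) = S1"
        unfolding S1_def by (rule index_of_real_block_mult(2)[OF Bs x p i])
      moreover have "vec_block n x p $ i = X" and "sweep n ?d (inverse lam) ?g p $ i = S1 + inverse lam * S2"
        using i unfolding X_def S1_def S2_def by (simp_all add: vec_block_def sweep_def)
      moreover have "S2 = lam * (X - S1) \<longleftrightarrow> X = S1 + inverse lam * S2"
        using lam by (auto simp: field_simps)
      ultimately show ?thesis
        by (simp only:)
    qed
    have "v = w \<longleftrightarrow> (\<forall>i<n. v $ i = w $ i)" if "dim_vec v = n" "dim_vec w = n" for v w :: "complex vec"
      using that by (auto simp: vec_eq_iff)
    then show ?thesis
      using component by (simp add: vec_block_def sweep_def)
  qed
  have "?U = lam \<cdot>\<^sub>v (x - ?L) \<longleftrightarrow> (\<forall>p<?d. vec_block n ?U p = vec_block n (lam \<cdot>\<^sub>v (x - ?L)) p)"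
    by (rule vec_eq_iff_vec_block) (use U L x in auto)
  also have "\<dots> \<longleftrightarrow> (\<forall>p<?d. vec_block n x p = sweep n ?d (inverse lam) ?g p)"
    using blockwise by blast
  finally show ?thesis .
qed

lemma eigenvalue_of_real_iter_mat_iff_block_eigenvector:
  fixes Bs :: "real mat list" and lam :: complex
  assumes Bs: "\<And>B. B \<in> set Bs \<Longrightarrow> B \<in> carrier_mat n n" and lam: "lam \<noteq> 0"
  shows "eigenvalue (map_mat complex_of_real (iter_mat n Bs)) lam \<longleftrightarrow>
    (\<exists>Y. block_eigenvector n (map (map_mat complex_of_real) Bs) lam Y)"
proof -
  let ?d = "length Bs" and ?Cs = "map (map_mat complex_of_real) Bs"
  let ?S = "\<lambda>Y. sweep n ?d (inverse lam) (\<lambda>q. ?Cs ! q *\<^sub>v Y q)"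
  have "eigenvalue (map_mat complex_of_real (iter_mat n Bs)) lam \<longleftrightarrow>
      (\<exists>x\<in>carrier_vec (?d * n). x \<noteq> 0\<^sub>v (?d * n) \<and> (\<forall>p<?d. vec_block n x p = ?S (vec_block n x) p))"
    unfolding eigenvalue_of_real_iter_mat_iff using iter_equation_iff_sweep[OF Bs lam] by auto
  also have "\<dots> \<longleftrightarrow> (\<exists>Y. block_eigenvector n ?Cs lam Y)"
  proof
    assume "\<exists>x\<in>carrier_vec (?d * n). x \<noteq> 0\<^sub>v (?d * n) \<and> (\<forall>p<?d. vec_block n x p = ?S (vec_block n x) p)"
    then obtain x where x: "x \<in> carrier_vec (?d * n)" "x \<noteq> 0\<^sub>v (?d * n)"
      and eq: "\<forall>p<?d. vec_block n x p = ?S (vec_block n x) p"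
      by blast
    obtain p where p: "p < ?d" "vec_block n x p \<noteq> vec_block n (0\<^sub>v (?d * n)) p"
      using x vec_eq_iff_vec_block[OF x(1) zero_carrier_vec] by blast
    then have "\<exists>p<?d. vec_block n x p \<noteq> 0\<^sub>v n"
      using vec_block_zero[OF p(1)] by metis
    then have "block_eigenvector n ?Cs lam (vec_block n x)"
      using eq unfolding block_eigenvector_def length_map by blast
    then show "\<exists>Y. block_eigenvector n ?Cs lam Y"
      by blast
  next
    assume "\<exists>Y. block_eigenvector n ?Cs lam Y"
    then obtain Y where nz: "\<exists>p<?d. Y p \<noteq> 0\<^sub>v n" and Y: "\<forall>p<?d. Y p = ?S Y p"
      unfolding block_eigenvector_def length_map by blast
    define x where "x = vec (?d * n) (\<lambda>j. Y (j div n) $ (j mod n))"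
    have x: "x \<in> carrier_vec (?d * n)"
      unfolding x_def by simp
    have Y_carrier: "Y p \<in> carrier_vec n" if "p < ?d" for p
    proof -
      have "Y p = ?S Y p"
        using Y that by blast
      then show ?thesis
        by (simp only:) (rule sweep_carrier)
    qed
    have blocks: "vec_block n x p = Y p" if "p < ?d" for p
      unfolding x_def using vec_block_of_blocks[where Y = Y, OF that Y_carrier[OF that]] .
    have "vec_block n x p = ?S (vec_block n x) p" if p: "p < ?d" for p
    proof -
      have "vec_block n x p = ?S Y p"
        using blocks[OF p] Y[rule_format, OF p] by simp
      also have "\<dots> = ?S (vec_block n x) p"
        using blocks p by (intro sweep_cong) auto
      finally show ?thesis .
    qed
    moreover have "x \<noteq> 0\<^sub>v (?d * n)"
    proof
      assume "x = 0\<^sub>v (?d * n)"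
      moreover obtain p where "p < ?d" "Y p \<noteq> 0\<^sub>v n"
        using nz by blast
      ultimately show False
        using blocks vec_block_zero by metis
    qed
    ultimately show "\<exists>x\<in>carrier_vec (?d * n). x \<noteq> 0\<^sub>v (?d * n) \<and> (\<forall>p<?d. vec_block n x p = ?S (vec_block n x) p)"
      using x by blast
  qed
  finally show ?thesis .
qed

lemma (in semiring_hom) sums_to_hom:
  assumes B: "B \<in> carrier_mat n n" and Bs: "\<And>C. C \<in> set Bs \<Longrightarrow> C \<in> carrier_mat n n"
    and sum: "sums_to n Bs B"
  shows "sums_to n (map (map_mat hom) Bs) (map_mat hom B)"
  unfolding sums_to_def
proof (intro allI impI)
  fix i j assume ij: "i < n" "j < n"
  have "map_mat hom B $$ (i, j) = (\<Sum>q<length Bs. hom (Bs ! q $$ (i, j)))"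
    using sum B ij unfolding sums_to_def by (simp add: hom_sum)
  also have "\<dots> = (\<Sum>q<length Bs. map (map_mat hom) Bs ! q $$ (i, j))"
  proof (rule sum.cong[OF refl])
    fix q assume "q \<in> {..<length Bs}"
    then have "q < length Bs" "Bs ! q \<in> carrier_mat n n"
      using Bs by auto
    then show "hom (Bs ! q $$ (i, j)) = map (map_mat hom) Bs ! q $$ (i, j)"
      using ij by simp
  qed
  finally show "map_mat hom B $$ (i, j) = (\<Sum>q<length (map (map_mat hom) Bs). map (map_mat hom) Bs ! q $$ (i, j))"
    by simp
qed

lemma (in semiring_hom) annihilates_later_hom:
  assumes Bs: "\<And>C. C \<in> set Bs \<Longrightarrow> C \<in> carrier_mat n n" and ann: "annihilates_later n Bs"
  shows "annihilates_later n (map (map_mat hom) Bs)"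
  unfolding annihilates_later_def
proof (intro allI impI)
  fix q r assume "q \<le> r" "r < length (map (map_mat hom) Bs)"
  then have "q < length Bs" "r < length Bs" "Bs ! q * Bs ! r = 0\<^sub>m n n"
    using ann unfolding annihilates_later_def by auto
  moreover have "Bs ! q \<in> carrier_mat n n" "Bs ! r \<in> carrier_mat n n"
    using Bs \<open>q < length Bs\<close> \<open>r < length Bs\<close> by auto
  ultimately have "map_mat hom (Bs ! q) * map_mat hom (Bs ! r) = map_mat hom (0\<^sub>m n n)"
    using mat_hom_mult[of "Bs ! q" n n "Bs ! r" n] by simp
  also have "\<dots> = 0\<^sub>m n n"
    by (intro eq_matI) auto
  finally show "map (map_mat hom) Bs ! q * map (map_mat hom) Bs ! r = 0\<^sub>m n n"
    using \<open>q < length Bs\<close> \<open>r < length Bs\<close> by simp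
qed

theorem eigenvalue_iter_mat_iff_B_sGS:
  fixes Ps Qs :: "real mat list" and lam :: complex
  assumes pieces: "\<And>B. B \<in> set (Ps @ Qs) \<Longrightarrow> B \<in> carrier_mat n n"
    and L: "L \<in> carrier_mat n n" "\<And>i j. i < n \<Longrightarrow> j < n \<Longrightarrow> i \<le> j \<Longrightarrow> L $$ (i,j) = 0" "sums_to n Ps L"
    and U: "U \<in> carrier_mat n n" "\<And>i j. i < n \<Longrightarrow> j < n \<Longrightarrow> j \<le> i \<Longrightarrow> U $$ (i,j) = 0" "sums_to n Qs U"
    and ann: "annihilates_later n Ps" "annihilates_later n Qs"
    and lam: "lam \<noteq> 0"
  shows "eigenvalue (map_mat complex_of_real (iter_mat n (Ps @ Qs))) lam \<longleftrightarrow>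
    eigenvalue (map_mat complex_of_real (B_sGS n L U)) lam"
proof -
  let ?c = "map_mat complex_of_real"
  have IL: "1\<^sub>m n - L \<in> carrier_mat n n" "det (1\<^sub>m n - L) = 1"
    using det_one_minus_strictly_lower[OF L(1,2)] minus_carrier_mat[OF L(1)] by auto
  have IU: "1\<^sub>m n - U \<in> carrier_mat n n" "det (1\<^sub>m n - U) = 1"
    using det_one_minus_strictly_upper[OF U(1,2)] minus_carrier_mat[OF U(1)] by auto
  have cI: "?c (1\<^sub>m n - A) = 1\<^sub>m n - ?c A" if "A \<in> carrier_mat n n" for A
    using that by (intro eq_matI) auto
  define Pl Pu where "Pl = inv_mat (1\<^sub>m n - L)" and "Pu = inv_mat (1\<^sub>m n - U)"
  have Pl: "Pl \<in> carrier_mat n n" and Pu: "Pu \<in> carrier_mat n n"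
    unfolding Pl_def Pu_def using inv_mat_inverse(1) IL IU by auto
  have Pl_inv: "?c Pl * (1\<^sub>m n - ?c L) = 1\<^sub>m n" "(1\<^sub>m n - ?c L) * ?c Pl = 1\<^sub>m n"
    using of_real_inv_mat[OF IL(1)] IL(2) cI[OF L(1)] unfolding Pl_def by auto
  have Pu_inv: "?c Pu * (1\<^sub>m n - ?c U) = 1\<^sub>m n" "(1\<^sub>m n - ?c U) * ?c Pu = 1\<^sub>m n"
    using of_real_inv_mat[OF IU(1)] IU(2) cI[OF U(1)] unfolding Pu_def by auto
  have "?c (B_sGS n L U) = ?c (Pu * L * Pl) * ?c U"
    unfolding B_sGS_def Pl_def[symmetric] Pu_def[symmetric]
    by (rule of_real_hom.mat_hom_mult) (use Pu Pl L U in auto)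
  also have "?c (Pu * L * Pl) = ?c (Pu * L) * ?c Pl"
    by (rule of_real_hom.mat_hom_mult) (use Pu Pl L in auto)
  also have "?c (Pu * L) = ?c Pu * ?c L"
    by (rule of_real_hom.mat_hom_mult) (use Pu L in auto)
  finally have sGS: "?c (B_sGS n L U) = ?c Pu * ?c L * ?c Pl * ?c U" .
  have "eigenvalue (?c (iter_mat n (Ps @ Qs))) lam \<longleftrightarrow>
      (\<exists>Y. block_eigenvector n (map ?c Ps @ map ?c Qs) lam Y)"
    using eigenvalue_of_real_iter_mat_iff_block_eigenvector[of "Ps @ Qs" n lam] pieces lam by simp
  also have "\<dots> \<longleftrightarrow> (\<exists>a b. sgs_eigenpair n (?c L) (?c U) lam a b)"
    by (rule block_eigenvector_iff_sgs_eigenpair)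
      (use pieces L U ann Pl Pl_inv lam in
        \<open>auto intro!: of_real_hom.sums_to_hom of_real_hom.annihilates_later_hom\<close>)
  also have "\<dots> \<longleftrightarrow> eigenvalue (?c (B_sGS n L U)) lam"
    unfolding sGS by (rule eigenvalue_sgs_iff[symmetric]) (use L U Pl Pu Pl_inv Pu_inv lam in auto)
  finally show ?thesis .
qed

section \<open>The splittings FTC and FTR\<close>

lemma annihilates_later_map_upt:
  assumes "\<And>k l. a \<le> k \<Longrightarrow> k \<le> l \<Longrightarrow> l < b \<Longrightarrow> P k * P l = 0\<^sub>m n n"
  shows "annihilates_later n (map P [a..<b])"
  using assms unfolding annihilates_later_def by auto

lemma annihilates_later_map_rev_upt:
  assumes "\<And>k l. a \<le> l \<Longrightarrow> l \<le> k \<Longrightarrow> k < b \<Longrightarrow> P k * P l = 0\<^sub>m n n"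
  shows "annihilates_later n (map P (rev [a..<b]))"
  using assms unfolding annihilates_later_def by (auto simp: rev_nth)

lemma sums_to_map_distinct:
  assumes "distinct xs" and "\<And>i j. i < n \<Longrightarrow> j < n \<Longrightarrow> B $$ (i,j) = (\<Sum>k\<in>set xs. P k $$ (i,j))"
  shows "sums_to n (map P xs) B"
  unfolding sums_to_def
proof (intro allI impI)
  fix i j assume ij: "i < n" "j < n"
  have "(\<Sum>q<length (map P xs). map P xs ! q $$ (i,j)) = sum_list (map (\<lambda>k. P k $$ (i,j)) xs)"
    by (simp add: sum_list_sum_nth atLeast0LessThan)
  also have "\<dots> = (\<Sum>k\<in>set xs. P k $$ (i,j))"
    by (rule sum_list_distinct_conv_sum_set[OF assms(1)])
  finally show "B $$ (i,j) = (\<Sum>q<length (map P xs). map P xs ! q $$ (i,j))"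
    using assms(2)[OF ij] by simp
qed

lemma Lc_mult_Lc: "k \<le> l \<Longrightarrow> Lc n L k * Lc n L l = 0\<^sub>m n n"
  by (intro eq_matI) (auto simp: Lc_def scalar_prod_def intro!: sum.neutral)

lemma Uc_mult_Uc: "l \<le> k \<Longrightarrow> Uc n U k * Uc n U l = 0\<^sub>m n n"
  by (intro eq_matI) (auto simp: Uc_def scalar_prod_def intro!: sum.neutral)

lemma Lr_mult_Lr: "k \<le> l \<Longrightarrow> Lr n L k * Lr n L l = 0\<^sub>m n n"
  by (intro eq_matI) (auto simp: Lr_def scalar_prod_def intro!: sum.neutral)

lemma Ur_mult_Ur: "l \<le> k \<Longrightarrow> Ur n U k * Ur n U l = 0\<^sub>m n n"
  by (intro eq_matI) (auto simp: Ur_def scalar_prod_def intro!: sum.neutral)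

lemma sums_to_Lc:
  assumes "\<And>i j. i < n \<Longrightarrow> j < n \<Longrightarrow> i \<le> j \<Longrightarrow> L $$ (i,j) = 0"
  shows "sums_to n (map (Lc n L) [0..<n - 1]) L"
proof (rule sums_to_map_distinct)
  fix i j assume ij: "i < n" "j < n"
  have "(\<Sum>k\<in>set [0..<n - 1]. Lc n L k $$ (i,j)) = (\<Sum>k\<in>{0..<n - 1}. if k = j then (if j < i then L $$ (i,j) else 0) else 0)"
    using ij by (intro sum.cong) (auto simp: Lc_def)
  then show "L $$ (i,j) = (\<Sum>k\<in>set [0..<n - 1]. Lc n L k $$ (i,j))"
    using ij assms[of i j] by (auto simp: sum.delta)
qed simp

lemma sums_to_Uc:
  assumes "\<And>i j. i < n \<Longrightarrow> j < n \<Longrightarrow> j \<le> i \<Longrightarrow> U $$ (i,j) = 0"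
  shows "sums_to n (map (Uc n U) (rev [1..<n])) U"
proof (rule sums_to_map_distinct)
  fix i j assume ij: "i < n" "j < n"
  have "(\<Sum>k\<in>set (rev [1..<n]). Uc n U k $$ (i,j)) = (\<Sum>k\<in>{1..<n}. if k = j then (if i < j then U $$ (i,j) else 0) else 0)"
    using ij by (intro sum.cong) (auto simp: Uc_def)
  then show "U $$ (i,j) = (\<Sum>k\<in>set (rev [1..<n]). Uc n U k $$ (i,j))"
    using ij assms[of i j] by (auto simp: sum.delta)
qed simp

lemma sums_to_Lr:
  assumes "\<And>i j. i < n \<Longrightarrow> j < n \<Longrightarrow> i \<le> j \<Longrightarrow> L $$ (i,j) = 0"
  shows "sums_to n (map (Lr n L) [1..<n]) L"
proof (rule sums_to_map_distinct)
  fix i j assume ij: "i < n" "j < n"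
  have "(\<Sum>k\<in>set [1..<n]. Lr n L k $$ (i,j)) = (\<Sum>k\<in>{1..<n}. if k = i then (if j < i then L $$ (i,j) else 0) else 0)"
    using ij by (intro sum.cong) (auto simp: Lr_def)
  then show "L $$ (i,j) = (\<Sum>k\<in>set [1..<n]. Lr n L k $$ (i,j))"
    using ij assms[of i j] by (auto simp: sum.delta)
qed simp

lemma sums_to_Ur:
  assumes "\<And>i j. i < n \<Longrightarrow> j < n \<Longrightarrow> j \<le> i \<Longrightarrow> U $$ (i,j) = 0"
  shows "sums_to n (map (Ur n U) (rev [0..<n - 1])) U"
proof (rule sums_to_map_distinct)
  fix i j assume ij: "i < n" "j < n"
  have "(\<Sum>k\<in>set (rev [0..<n - 1]). Ur n U k $$ (i,j)) = (\<Sum>k\<in>{0..<n - 1}. if k = i then (if i < j then U $$ (i,j) else 0) else 0)"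
    using ij by (intro sum.cong) (auto simp: Ur_def)
  then show "U $$ (i,j) = (\<Sum>k\<in>set (rev [0..<n - 1]). Ur n U k $$ (i,j))"
    using ij assms[of i j] by (auto simp: sum.delta)
qed simp

theorem theorem6p5:
  fixes n :: nat and L U :: "real mat"
  assumes "n \<ge> 2"
    and "L \<in> carrier_mat n n" and "U \<in> carrier_mat n n"
    and "\<And>i j. i < n \<Longrightarrow> j < n \<Longrightarrow> i \<le> j \<Longrightarrow> L $$ (i,j) = 0"
    and "\<And>i j. i < n \<Longrightarrow> j < n \<Longrightarrow> j \<le> i \<Longrightarrow> U $$ (i,j) = 0"
    and "\<And>j. j < n - 1 \<Longrightarrow> Lc n L j \<noteq> 0\<^sub>m n n"
    and "\<And>j. 1 \<le> j \<Longrightarrow> j < n \<Longrightarrow> Uc n U j \<noteq> 0\<^sub>m n n"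
    and "\<And>i. 1 \<le> i \<Longrightarrow> i < n \<Longrightarrow> Lr n L i \<noteq> 0\<^sub>m n n"
    and "\<And>i. i < n - 1 \<Longrightarrow> Ur n U i \<noteq> 0\<^sub>m n n"
  shows "nonzero_eigs (iter_mat n (B_FTC n L U)) = nonzero_eigs (B_sGS n L U)
       \<and> nonzero_eigs (iter_mat n (B_FTR n L U)) = nonzero_eigs (B_sGS n L U)"
proof -
  text \<open>The nonvanishing of the pieces only makes \<open>B_FTC\<close> and \<open>B_FTR\<close> splittings in the
    paper's sense; the eigenvalue identity does not need it.\<close>
  have FTC: "eigenvalue (map_mat complex_of_real (iter_mat n (B_FTC n L U))) e
      \<longleftrightarrow> eigenvalue (map_mat complex_of_real (B_sGS n L U)) e" if "e \<noteq> 0" for e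
    unfolding B_FTC_def
    by (rule eigenvalue_iter_mat_iff_B_sGS[OF _ assms(2,4) sums_to_Lc[OF assms(4)]
          assms(3,5) sums_to_Uc[OF assms(5)] _ _ that])
      (auto simp: Lc_def Uc_def intro: annihilates_later_map_upt annihilates_later_map_rev_upt
        Lc_mult_Lc Uc_mult_Uc)
  have FTR: "eigenvalue (map_mat complex_of_real (iter_mat n (B_FTR n L U))) e
      \<longleftrightarrow> eigenvalue (map_mat complex_of_real (B_sGS n L U)) e" if "e \<noteq> 0" for e
    unfolding B_FTR_def
    by (rule eigenvalue_iter_mat_iff_B_sGS[OF _ assms(2,4) sums_to_Lr[OF assms(4)]
          assms(3,5) sums_to_Ur[OF assms(5)] _ _ that])
      (auto simp: Lr_def Ur_def intro: annihilates_later_map_upt annihilates_later_map_rev_upt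
        Lr_mult_Lr Ur_mult_Ur)
  show ?thesis
    unfolding nonzero_eigs_def using FTC FTR by auto
qed

end
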